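(* Let $n\ge1$, let $f:\mathbb{R}\to\mathbb{R}$ satisfy (A1) and (A2), and let $c\in\mathbb{R}^n$ with $0<|c|<\sqrt2$. Then there exists $u\in H^2(\mathbb{R}^n)$ with $u\not\equiv0$ and $P_c(u)=0$.
   Context: (A1) $f$ is differentiable almost everywhere and $\liminf_{u\to-\infty}\big(f(u)+u\big)>-\infty$. (A2) There are constants $C_1>0$, $p\ge1$, $q>1$ with $|f(u)-f(v)|\le C_1(|u|+|v|)^{p-1}|u-v|$ and $|f(u)|\le C_1|u|^q$ for all $u,v\in\mathbb{R}$; if $n>4$ one also assumes $p,q<\frac{n+4}{n-4}$. For $c\in\mathbb{R}^n$ and $z\in H^2(\mathbb{R}^n)$, $\|z\|^2=\int_{\mathbb{R}^n}(\Delta z)^2-(c\cdot\nabla z)^2+z^2\,dx$ and $P_c(z)=\|z\|^2+\int_{\mathbb{R}^n}zf(z)\,dx$. *)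

theory Defs
  imports "HOL-Analysis.Analysis"
begin

definition partial :: "'n::finite \<Rightarrow> (real^'n \<Rightarrow> real) \<Rightarrow> real^'n \<Rightarrow> real" where
  "partial i \<phi> x = frechet_derivative \<phi> (at x) (axis i 1)"

definition smooth_fun :: "(real^'n::finite \<Rightarrow> real) \<Rightarrow> bool" where
  "smooth_fun \<phi> \<longleftrightarrow> (\<forall>is::'n list. \<forall>x. (foldr partial is \<phi>) differentiable (at x))"

definition test_fun :: "(real^'n::finite \<Rightarrow> real) \<Rightarrow> bool" where
  "test_fun \<phi> \<longleftrightarrow> smooth_fun \<phi> \<and> compact (closure {x. \<phi> x \<noteq> 0})"

definition L2 :: "(real^'n::finite \<Rightarrow> real) \<Rightarrow> bool" where
  "L2 u \<longleftrightarrow> u \<in> borel_measurable lebesgue \<and> integrable lebesgue (\<lambda>x. (u x)^2)"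

definition weak_partial :: "(real^'n::finite \<Rightarrow> real) \<Rightarrow> 'n \<Rightarrow> (real^'n \<Rightarrow> real) \<Rightarrow> bool" where
  "weak_partial u i g \<longleftrightarrow> (\<forall>\<phi>. test_fun \<phi> \<longrightarrow>
     (\<integral>x. u x * partial i \<phi> x \<partial>lebesgue) = - (\<integral>x. g x * \<phi> x \<partial>lebesgue))"

definition weak_partial2 :: "(real^'n::finite \<Rightarrow> real) \<Rightarrow> 'n \<Rightarrow> 'n \<Rightarrow> (real^'n \<Rightarrow> real) \<Rightarrow> bool" where
  "weak_partial2 u i j h \<longleftrightarrow> (\<forall>\<phi>. test_fun \<phi> \<longrightarrow>
     (\<integral>x. u x * partial i (partial j \<phi>) x \<partial>lebesgue) = (\<integral>x. h x * \<phi> x \<partial>lebesgue))"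

definition H2_with :: "(real^'n::finite \<Rightarrow> real) \<Rightarrow> ('n \<Rightarrow> real^'n \<Rightarrow> real)
    \<Rightarrow> ('n \<Rightarrow> 'n \<Rightarrow> real^'n \<Rightarrow> real) \<Rightarrow> bool" where
  "H2_with u G H \<longleftrightarrow> L2 u \<and> (\<forall>i. L2 (G i) \<and> weak_partial u i (G i))
     \<and> (\<forall>i j. L2 (H i j) \<and> weak_partial2 u i j (H i j))"

text \<open>P_c(u) = ||u||^2 + int u f(u), computed from the weak derivatives.\<close>
definition Pc :: "real^'n::finite \<Rightarrow> (real \<Rightarrow> real) \<Rightarrow> (real^'n \<Rightarrow> real)
    \<Rightarrow> ('n \<Rightarrow> real^'n \<Rightarrow> real) \<Rightarrow> ('n \<Rightarrow> 'n \<Rightarrow> real^'n \<Rightarrow> real) \<Rightarrow> real" where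
  "Pc c f u G H =
     (\<integral>x. (\<Sum>i\<in>UNIV. H i i x)^2 - (\<Sum>i\<in>UNIV. c$i * G i x)^2 + (u x)^2 \<partial>lebesgue)
     + (\<integral>x. u x * f (u x) \<partial>lebesgue)"

end

theory Submission
  imports Defs
begin

text \<open>
  Let \<open>b(x) = (1 - |x|\<^sup>2)\<^sub>+\<^sup>3\<close>, a \<open>C\<^sup>1\<^sup>,\<^sup>1\<close> bump supported in the unit ball, and
  \<open>b\<^sub>\<lambda>(x) = b(x/\<lambda>)\<close>. Scaling gives \<open>\<parallel>t b\<^sub>\<lambda>\<parallel>\<^sup>2 = t\<^sup>2 \<lambda>\<^sup>n (D/\<lambda>\<^sup>4 - E/\<lambda>\<^sup>2 + W)\<close>, where D, E, W
  are the squared \<open>L\<^sup>2\<close> norms of \<open>\<Delta>b\<close>, \<open>c \<cdot> \<nabla>b\<close> and b; E > 0 since \<open>c \<noteq> 0\<close> and \<open>|c| < 2\<close>.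
  For large \<open>\<lambda>\<close> the coefficient \<open>A\<close> of \<open>t\<^sup>2\<close> satisfies \<open>0 < A < \<parallel>b\<^sub>\<lambda>\<parallel>\<^sup>2\<^sub>L\<^sub>2\<close>. The nonlinear
  term \<open>N(t) = \<integral> t b\<^sub>\<lambda> f(t b\<^sub>\<lambda>)\<close> is continuous, is \<open>O(|t|\<^sup>q\<^sup>+\<^sup>1)\<close> by (A2), and is at most
  \<open>-t\<^sup>2 \<parallel>b\<^sub>\<lambda>\<parallel>\<^sup>2 + O(|t|)\<close> for \<open>t \<le> 0\<close> by the liminf condition in (A1). Hence
  \<open>t \<mapsto> P\<^sub>c(t b\<^sub>\<lambda>) = t\<^sup>2 A + N(t)\<close> changes sign on \<open>t < 0\<close> and has a zero there.
\<close>

subsection \<open>Derivatives along coordinate lines\<close>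

text \<open>This is the only notion of derivative the construction needs.\<close>

definition has_line_deriv :: "(real^'n::finite \<Rightarrow> real) \<Rightarrow> 'n \<Rightarrow> (real^'n \<Rightarrow> real) \<Rightarrow> bool" where
  "has_line_deriv F i F' \<longleftrightarrow>
     (\<forall>x. ((\<lambda>s. F (x + s *\<^sub>R axis i 1)) has_real_derivative F' x) (at 0))"

lemma has_line_deriv_at:
  assumes "has_line_deriv F i F'"
  shows "((\<lambda>s. F (x + s *\<^sub>R axis i 1)) has_real_derivative F' (x + t *\<^sub>R axis i 1)) (at t)"
proof -
  have "((\<lambda>s. F ((x + t *\<^sub>R axis i 1) + s *\<^sub>R axis i 1)) has_real_derivative
      F' (x + t *\<^sub>R axis i 1)) (at 0)"
    using assms unfolding has_line_deriv_def by blast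
  then have "((\<lambda>s. F (x + (s + t) *\<^sub>R axis i 1)) has_real_derivative F' (x + t *\<^sub>R axis i 1)) (at 0)"
    by (simp add: algebra_simps scaleR_add_left)
  then show ?thesis
    using DERIV_shift[of "\<lambda>s. F (x + s *\<^sub>R axis i 1)" "F' (x + t *\<^sub>R axis i 1)" 0 t] by simp
qed

lemma has_line_deriv_mult:
  assumes "has_line_deriv F i F'" "has_line_deriv V i V'"
  shows "has_line_deriv (\<lambda>x. F x * V x) i (\<lambda>x. F' x * V x + F x * V' x)"
  unfolding has_line_deriv_def
proof
  fix x
  show "((\<lambda>s. F (x + s *\<^sub>R axis i 1) * V (x + s *\<^sub>R axis i 1)) has_real_derivative
      F' x * V x + F x * V' x) (at 0)"
    using DERIV_mult'[OF assms[unfolded has_line_deriv_def, rule_format, of x]]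
    by (simp add: algebra_simps)
qed

lemma has_line_deriv_of_differentiable:
  fixes F :: "real^'n::finite \<Rightarrow> real"
  assumes "\<And>x. F differentiable (at x)"
  shows "has_line_deriv F i (partial i F)"
  unfolding has_line_deriv_def
proof
  fix x
  let ?D = "frechet_derivative F (at x)"
  have "(F has_derivative ?D) (at x)"
    using assms frechet_derivative_works by blast
  then have d: "(F has_derivative ?D) (at (x + 0 *\<^sub>R axis i 1))"
    by simp
  have line: "((\<lambda>s::real. x + s *\<^sub>R axis i 1) has_derivative (\<lambda>s. s *\<^sub>R axis i 1)) (at 0)"
    by (auto intro!: derivative_eq_intros)
  have "((\<lambda>s. F (x + s *\<^sub>R axis i 1)) has_derivative (\<lambda>s. ?D (s *\<^sub>R axis i 1))) (at 0)"
    using diff_chain_at[OF line d] by (simp add: o_def)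
  moreover have "(\<lambda>s. ?D (s *\<^sub>R axis i 1)) = (*) (partial i F x)"
    using linear_scale[OF has_derivative_linear[OF d]] unfolding partial_def by auto
  ultimately show "((\<lambda>s. F (x + s *\<^sub>R axis i 1)) has_real_derivative partial i F x) (at 0)"
    unfolding has_field_derivative_def by simp
qed

lemma has_line_deriv_radial:
  fixes g g' :: "real \<Rightarrow> real"
  assumes "\<And>r. (g has_real_derivative g' r) (at r)"
  shows "has_line_deriv (\<lambda>x::real^'n::finite. g (x \<bullet> x)) i (\<lambda>x. g' (x \<bullet> x) * (2 * x$i))"
  unfolding has_line_deriv_def
proof
  fix x :: "real^'n"
  have square: "(x + s *\<^sub>R axis i 1) \<bullet> (x + s *\<^sub>R axis i 1) = x \<bullet> x + 2 * s * x$i + s^2" for s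
    by (simp add: inner_add_left inner_add_right inner_axis inner_axis_axis
        inner_commute[of "axis i 1" x] algebra_simps power2_eq_square)
  have "((\<lambda>s. x \<bullet> x + 2 * s * x$i + s^2) has_real_derivative 2 * x$i) (at 0)"
    by (auto intro!: derivative_eq_intros)
  from DERIV_chain2[OF assms this]
  show "((\<lambda>s. g ((x + s *\<^sub>R axis i 1) \<bullet> (x + s *\<^sub>R axis i 1))) has_real_derivative
      g' (x \<bullet> x) * (2 * x$i)) (at 0)"
    unfolding square by simp
qed

lemma has_line_deriv_component:
  "has_line_deriv (\<lambda>x::real^'n::finite. a * x$k) j (\<lambda>x. if k = j then a else 0)"
  unfolding has_line_deriv_def
proof
  fix x :: "real^'n"
  have "(x + s *\<^sub>R axis j 1) $ k = x$k + (if k = j then s else 0)" for s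
    by (simp add: axis_def)
  moreover have "((\<lambda>s. a * (x$k + (if k = j then s else 0))) has_real_derivative
      (if k = j then a else 0)) (at 0)"
    by (cases "k = j") (auto intro!: derivative_eq_intros)
  ultimately show "((\<lambda>s. a * (x + s *\<^sub>R axis j 1) $ k) has_real_derivative
      (if k = j then a else 0)) (at 0)"
    by simp
qed

subsection \<open>Lebesgue integrals on \<open>\<real>\<^sup>n\<close>\<close>

lemma continuous_lborel_measurable:
  "continuous_on UNIV (F :: 'a::euclidean_space \<Rightarrow> real) \<Longrightarrow> F \<in> borel_measurable lborel"
  using borel_measurable_continuous_onI by simp

lemma continuous_lebesgue_integral:
  fixes F :: "'a::euclidean_space \<Rightarrow> real"
  assumes "continuous_on UNIV F"
  shows "F \<in> borel_measurable lebesgue"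
    and "integrable lebesgue F \<longleftrightarrow> integrable lborel F"
    and "integral\<^sup>L lebesgue F = integral\<^sup>L lborel F"
  using measurable_completion[OF continuous_lborel_measurable[OF assms]]
    integrable_completion[OF continuous_lborel_measurable[OF assms]]
    integral_completion[OF continuous_lborel_measurable[OF assms]]
  by simp_all

lemma integrable_compact_support:
  fixes F :: "'a::euclidean_space \<Rightarrow> real"
  assumes "continuous_on UNIV F" "compact K" "\<And>x. x \<notin> K \<Longrightarrow> F x = 0"
  shows "integrable lborel F"
proof -
  have "integrable lborel (\<lambda>x. indicator K x *\<^sub>R F x)"
    using assms(1,2) by (intro borel_integrable_compact) (auto intro: continuous_on_subset)
  moreover have "(\<lambda>x. indicator K x *\<^sub>R F x) = F"
    using assms(3) by (auto simp: fun_eq_iff indicator_def)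
  ultimately show ?thesis by simp
qed

lemma integrable_square_compact_support:
  fixes F :: "'a::euclidean_space \<Rightarrow> real"
  assumes "continuous_on UNIV F" "compact K" "\<And>x. x \<notin> K \<Longrightarrow> F x = 0"
  shows "integrable lborel (\<lambda>x. (F x)^2)"
  by (rule integrable_compact_support[OF _ assms(2)]) (use assms in \<open>auto intro!: continuous_intros\<close>)

lemma lborel_integral_affine:
  fixes F :: "'a::euclidean_space \<Rightarrow> real"
  assumes "F \<in> borel_measurable lborel" "c \<noteq> 0"
  shows "integral\<^sup>L lborel F = \<bar>c\<bar> ^ DIM('a) * integral\<^sup>L lborel (\<lambda>x. F (t + c *\<^sub>R x))"
proof -
  have "integral\<^sup>L lborel F =
      integral\<^sup>L (density (distr lborel borel (\<lambda>x. t + c *\<^sub>R x)) (\<lambda>_. \<bar>c\<bar> ^ DIM('a))) F"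
    using lborel_affine[of c t] assms by simp
  also have "\<dots> = \<bar>c\<bar> ^ DIM('a) * integral\<^sup>L lborel (\<lambda>x. F (t + c *\<^sub>R x))"
    using assms by (simp add: integral_density integral_distr)
  finally show ?thesis .
qed

lemma lborel_integrable_affine:
  fixes F :: "'a::euclidean_space \<Rightarrow> real"
  assumes "integrable lborel F" "c \<noteq> 0"
  shows "integrable lborel (\<lambda>x. F (t + c *\<^sub>R x))"
proof -
  have "integrable (density (distr lborel borel (\<lambda>x. t + c *\<^sub>R x)) (\<lambda>_. \<bar>c\<bar> ^ DIM('a))) F"
    using lborel_affine[of c t] assms by simp
  then have "integrable (distr lborel borel (\<lambda>x. t + c *\<^sub>R x)) (\<lambda>x. \<bar>c\<bar> ^ DIM('a) * F x)"
    using assms by (subst (asm) integrable_density) auto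
  then have "integrable (distr lborel borel (\<lambda>x. t + c *\<^sub>R x)) F"
    using assms(2) by simp
  then show ?thesis
    using assms by (subst (asm) integrable_distr_eq) auto
qed

lemma integral_pos_continuous:
  fixes F :: "'a::euclidean_space \<Rightarrow> real"
  assumes cont: "continuous_on UNIV F" and nonneg: "\<And>x. 0 \<le> F x" and pos: "0 < F x0"
    and int: "integrable lborel F"
  shows "0 < integral\<^sup>L lborel F"
proof -
  obtain r where r: "0 < r" "\<And>y. dist y x0 < r \<Longrightarrow> dist (F y) (F x0) < F x0 / 2"
    using cont pos unfolding continuous_on_iff by (metis UNIV_I half_gt_zero)
  have below: "F x0 / 2 * indicator (ball x0 r) y \<le> F y" for y
  proof (cases "y \<in> ball x0 r")
    case True
    then have "dist y x0 < r" by (simp add: dist_commute)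
    then have "dist (F y) (F x0) < F x0 / 2" by (rule r(2))
    then have "F x0 / 2 \<le> F y" unfolding dist_real_def by arith
    then show ?thesis using True by simp
  qed (use nonneg in simp)
  have "integrable lborel (indicat_real (ball x0 r))"
    using emeasure_lborel_ball_finite[of x0 r] by (intro integrable_real_indicator) auto
  then have int_below: "integrable lborel (\<lambda>y. F x0 / 2 * indicator (ball x0 r) y)"
    by (rule integrable_mult_right)
  have "0 < F x0 / 2 * measure lborel (ball x0 r)"
    using r(1) pos by simp
  also have "\<dots> = (\<integral>y. F x0 / 2 * indicator (ball x0 r) y \<partial>lborel)"
    by simp
  also have "\<dots> \<le> integral\<^sup>L lborel F"
    by (rule integral_mono[OF int_below int below])
  finally show ?thesis .
qed

subsection \<open>Integration by parts and weak derivatives\<close>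

text \<open>Difference quotients of an integrable function have integral zero (translation invariance).\<close>

lemma difference_quotient_integral_eq_0:
  fixes P :: "'a::euclidean_space \<Rightarrow> real"
  assumes "integrable lborel P"
  shows "(\<integral>x. (P (x + e) - P x) / h \<partial>lborel) = 0"
proof -
  have "integrable lborel (\<lambda>x. P (e + x))"
    using lborel_integrable_affine[OF assms, of 1 e] by simp
  then have "(\<integral>x. (P (x + e) - P x) / h \<partial>lborel) =
      ((\<integral>x. P (e + x) \<partial>lborel) - integral\<^sup>L lborel P) / h"
    using assms by (simp add: add.commute)
  also have "\<dots> = 0"
    using lborel_integral_affine[OF borel_measurable_integrable[OF assms], of 1 e] by simp
  finally show ?thesis .
qed

text \<open>By the mean value theorem, difference quotients with step \<open>h \<le> 1\<close> are dominated by
  \<open>sup |P'|\<close> on a compact neighbourhood of the support.\<close>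

lemma difference_quotient_bound:
  fixes P P' :: "real^'n::finite \<Rightarrow> real"
  assumes deriv: "has_line_deriv P i P'" and bound: "\<And>x. \<bar>P' x\<bar> \<le> B"
    and vanish: "\<And>x. x \<notin> K \<Longrightarrow> P x = 0" and h: "0 < h" "h \<le> 1"
  shows "\<bar>(P (x + h *\<^sub>R axis i 1) - P x) / h\<bar>
    \<le> B * indicator ((\<lambda>p. fst p - snd p *\<^sub>R axis i 1) ` (K \<times> {-1..1})) x"
proof (cases "x \<in> (\<lambda>p. fst p - snd p *\<^sub>R axis i 1) ` (K \<times> {-1..1})")
  case True
  have "\<exists>z. 0 < z \<and> z < h \<and>
      P (x + h *\<^sub>R axis i 1) - P (x + 0 *\<^sub>R axis i 1) = (h - 0) * P' (x + z *\<^sub>R axis i 1)"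
    by (rule MVT2[OF h(1)]) (use has_line_deriv_at[OF deriv] in auto)
  then obtain z
    where "P (x + h *\<^sub>R axis i 1) - P (x + 0 *\<^sub>R axis i 1) = (h - 0) * P' (x + z *\<^sub>R axis i 1)"
    by blast
  then have "(P (x + h *\<^sub>R axis i 1) - P x) / h = P' (x + z *\<^sub>R axis i 1)"
    using h by simp
  then show ?thesis using True bound by simp
next
  case False
  have "P (x + s *\<^sub>R axis i 1) = 0" if "s \<in> {-1..1}" for s
  proof (rule vanish, rule notI)
    assume "x + s *\<^sub>R axis i 1 \<in> K"
    then have "(x + s *\<^sub>R axis i 1, s) \<in> K \<times> {-1..1}" using that by simp
    then show False using False by (force intro: image_eqI)
  qed
  from this[of h] this[of 0] show ?thesis using False h by simp
qed

text \<open>The integral of a continuous, compactly supported line derivative vanishes: the difference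
  quotients have integral zero and converge to it dominatedly.\<close>

lemma integral_line_deriv_eq_0:
  fixes P P' :: "real^'n::finite \<Rightarrow> real"
  assumes deriv: "has_line_deriv P i P'"
    and cont: "continuous_on UNIV P" "continuous_on UNIV P'"
    and K: "compact K" and vanish: "\<And>x. x \<notin> K \<Longrightarrow> P x = 0 \<and> P' x = 0"
  shows "integral\<^sup>L lborel P' = 0"
proof -
  define e :: "real^'n" where "e = axis i 1"
  define K' where "K' = (\<lambda>p. fst p - snd p *\<^sub>R e) ` (K \<times> {-1..1})"
  define h :: "nat \<Rightarrow> real" where "h k = 1 / Suc k" for k
  define Q where "Q k x = (P (x + h k *\<^sub>R e) - P x) / h k" for k x
  have vanish_P: "\<And>x. x \<notin> K \<Longrightarrow> P x = 0"
    using vanish by blast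
  obtain B where B: "\<And>x. \<bar>P' x\<bar> \<le> B"
  proof -
    have "bounded (P' ` K)"
      by (intro compact_imp_bounded compact_continuous_image continuous_on_subset[OF cont(2)] K) simp
    then obtain B where "B > 0" "\<And>y. y \<in> P' ` K \<Longrightarrow> \<bar>y\<bar> \<le> B"
      unfolding bounded_pos real_norm_def by blast
    then have "\<bar>P' x\<bar> \<le> B" for x
      using vanish[of x] by (cases "x \<in> K") auto
    then show thesis by (rule that)
  qed
  have "compact K'"
    unfolding K'_def
    by (intro compact_continuous_image compact_Times K compact_Icc) (auto intro!: continuous_intros)
  then have int_bound: "integrable lborel (\<lambda>x. B * indicator K' x)"
    using emeasure_compact_finite
    by (intro integrable_mult_right integrable_real_indicator) (auto simp: borel_compact)
  have h_lim: "filterlim h (at 0) sequentially"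
  proof (rule filterlim_atI)
    show "h \<longlonglongrightarrow> 0" unfolding h_def using LIMSEQ_Suc[OF lim_const_over_n[of 1]] by simp
  qed (simp add: h_def)
  have lim: "(\<lambda>k. Q k x) \<longlonglongrightarrow> P' x" for x
  proof -
    have "((\<lambda>s. (P (x + s *\<^sub>R e) - P (x + 0 *\<^sub>R e)) / s) \<longlongrightarrow> P' x) (at 0)"
      using deriv unfolding has_line_deriv_def e_def DERIV_def by (auto simp: algebra_simps)
    from filterlim_compose[OF this h_lim] show ?thesis unfolding Q_def by simp
  qed
  have int_Q: "integral\<^sup>L lborel (Q k) = 0" for k
  proof -
    have "integrable lborel P"
      by (rule integrable_compact_support[OF cont(1) K vanish_P])
    then show ?thesis unfolding Q_def by (rule difference_quotient_integral_eq_0)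
  qed
  have "(\<lambda>k. integral\<^sup>L lborel (Q k)) \<longlonglongrightarrow> integral\<^sup>L lborel P'"
  proof (rule integral_dominated_convergence[OF _ _ int_bound])
    show "P' \<in> borel_measurable lborel"
      using cont(2) by (rule continuous_lborel_measurable)
    show "Q k \<in> borel_measurable lborel" for k
      unfolding Q_def by (rule continuous_lborel_measurable)
        (auto simp: h_def intro!: continuous_intros continuous_on_compose2[OF cont(1)])
    show "AE x in lborel. norm (Q k x) \<le> B * indicator K' x" for k
    proof (rule AE_I2)
      fix x
      have "0 < h k" "h k \<le> 1" by (auto simp: h_def)
      from difference_quotient_bound[where x=x, OF deriv B vanish_P this]
      show "norm (Q k x) \<le> B * indicator K' x" unfolding Q_def K'_def e_def by simp
    qed
    show "AE x in lborel. (\<lambda>k. Q k x) \<longlonglongrightarrow> P' x"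
      using lim by simp
  qed
  then have "(\<lambda>k. 0) \<longlonglongrightarrow> integral\<^sup>L lborel P'" unfolding int_Q .
  from LIMSEQ_unique[OF tendsto_const this] show ?thesis by simp
qed

lemma integration_by_parts:
  fixes F F' V V' :: "real^'n::finite \<Rightarrow> real"
  assumes "has_line_deriv F i F'" "has_line_deriv V i V'"
    and cont: "continuous_on UNIV F" "continuous_on UNIV F'" "continuous_on UNIV V" "continuous_on UNIV V'"
    and K: "compact K" and vanish: "\<And>x. x \<notin> K \<Longrightarrow> V x = 0 \<and> V' x = 0"
  shows "(\<integral>x. F x * V' x \<partial>lebesgue) = - (\<integral>x. F' x * V x \<partial>lebesgue)"
proof -
  have cont_prod: "continuous_on UNIV (\<lambda>x. F x * V' x)" "continuous_on UNIV (\<lambda>x. F' x * V x)"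
    using cont by (auto intro!: continuous_intros)
  have vanish_V: "V x = 0" and vanish_V': "V' x = 0" if "x \<notin> K" for x
    using vanish[OF that] by auto
  have "integrable lborel (\<lambda>x. F x * V' x)"
    by (rule integrable_compact_support[OF cont_prod(1) K]) (simp add: vanish_V')
  moreover have "integrable lborel (\<lambda>x. F' x * V x)"
    by (rule integrable_compact_support[OF cont_prod(2) K]) (simp add: vanish_V)
  moreover have "(\<integral>x. F' x * V x + F x * V' x \<partial>lborel) = 0"
  proof (rule integral_line_deriv_eq_0[OF has_line_deriv_mult[OF assms(1,2)] _ _ K])
    show "continuous_on UNIV (\<lambda>x. F x * V x)"
      "continuous_on UNIV (\<lambda>x. F' x * V x + F x * V' x)"
      using cont by (auto intro!: continuous_intros)
    show "F x * V x = 0 \<and> F' x * V x + F x * V' x = 0" if "x \<notin> K" for x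
      using that by (simp add: vanish_V vanish_V')
  qed
  ultimately have "(\<integral>x. F' x * V x \<partial>lborel) + (\<integral>x. F x * V' x \<partial>lborel) = 0"
    by simp
  then show ?thesis
    using continuous_lebesgue_integral(3)[OF cont_prod(1)] continuous_lebesgue_integral(3)[OF cont_prod(2)]
    by simp
qed

lemma partial_eq_0_on_open:
  fixes F :: "real^'n::finite \<Rightarrow> real"
  assumes "open U" "x \<in> U" "\<And>y. y \<in> U \<Longrightarrow> F y = 0"
  shows "partial i F x = 0"
proof -
  have "((\<lambda>_. 0) has_derivative (\<lambda>_. 0)) (at x)" by simp
  then have "(F has_derivative (\<lambda>_. 0)) (at x)"
    by (rule has_derivative_transform_within_open[OF _ assms(1,2)]) (use assms(3) in auto)
  then show ?thesis unfolding partial_def using frechet_derivative_at by metis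
qed

lemma test_fun_derivs:
  fixes \<phi> :: "real^'n::finite \<Rightarrow> real"
  assumes "test_fun \<phi>"
  shows "continuous_on UNIV (foldr partial ds \<phi>)"
    and "has_line_deriv (foldr partial ds \<phi>) i (foldr partial (i # ds) \<phi>)"
    and "x \<notin> closure {y. \<phi> y \<noteq> 0} \<Longrightarrow> foldr partial ds \<phi> x = 0"
proof -
  have diff: "\<And>x. foldr partial ds \<phi> differentiable (at x)"
    using assms unfolding test_fun_def smooth_fun_def by blast
  show "continuous_on UNIV (foldr partial ds \<phi>)"
    by (rule continuous_at_imp_continuous_on) (use diff differentiable_imp_continuous_within in blast)
  show "has_line_deriv (foldr partial ds \<phi>) i (foldr partial (i # ds) \<phi>)"
    using has_line_deriv_of_differentiable[OF diff] by simp
  have "\<forall>y \<in> - closure {y. \<phi> y \<noteq> 0}. foldr partial ds \<phi> y = 0"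
  proof (induction ds)
    case Nil
    show ?case
    proof
      fix y assume "y \<in> - closure {y. \<phi> y \<noteq> 0}"
      then have "y \<notin> {y. \<phi> y \<noteq> 0}"
        using closure_subset[of "{y. \<phi> y \<noteq> 0}"] by (meson ComplD subsetD)
      then show "foldr partial [] \<phi> y = 0" by simp
    qed
  next
    case (Cons j ds)
    have "partial j (foldr partial ds \<phi>) y = 0" if "y \<in> - closure {y. \<phi> y \<noteq> 0}" for y
      by (rule partial_eq_0_on_open[OF _ that]) (use Cons.IH in auto)
    then show ?case by simp
  qed
  then show "foldr partial ds \<phi> x = 0" if "x \<notin> closure {y. \<phi> y \<noteq> 0}"
    using that by simp
qed

lemma weak_derivatives_of_line_derivs:
  fixes u :: "real^'n::finite \<Rightarrow> real"
  assumes cont: "continuous_on UNIV u" "continuous_on UNIV G" "continuous_on UNIV H"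
    and du: "has_line_deriv u i G" and dG: "has_line_deriv G j H"
  shows "weak_partial u i G" and "weak_partial2 u i j H"
proof -
  have parts: "(\<integral>x. F x * foldr partial (k # ds) \<phi> x \<partial>lebesgue) =
      - (\<integral>x. F' x * foldr partial ds \<phi> x \<partial>lebesgue)"
    if "test_fun \<phi>" "has_line_deriv F k F'" "continuous_on UNIV F" "continuous_on UNIV F'"
    for \<phi> F F' :: "real^'n \<Rightarrow> real" and k ds
  proof -
    have "compact (closure {y. \<phi> y \<noteq> 0})" using that(1) unfolding test_fun_def by blast
    then show ?thesis
      by (rule integration_by_parts[OF that(2) test_fun_derivs(2)[OF that(1)] that(3,4)
            test_fun_derivs(1)[OF that(1)] test_fun_derivs(1)[OF that(1)]])
         (intro conjI test_fun_derivs(3)[OF that(1)])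
  qed
  show "weak_partial u i G"
    unfolding weak_partial_def using parts[OF _ du cont(1,2), of _ "[]"] by simp
  show "weak_partial2 u i j H"
    unfolding weak_partial2_def
    using parts[OF _ du cont(1,2), of _ "[j]"] parts[OF _ dG cont(2,3), of _ "[]"] by simp
qed

subsection \<open>The bump function\<close>

text \<open>\<open>(1 - r)\<^sub>+\<^sup>k\<close> is differentiable for \<open>k \<ge> 2\<close>; the two pieces match to first order at
  \<open>r = 1\<close>.\<close>

definition cutoff :: "real \<Rightarrow> real" where
  "cutoff r = max 0 (1 - r)"

lemma cutoff_power_deriv:
  fixes k :: nat
  assumes k: "k \<ge> 2"
  shows "((\<lambda>r. cutoff r ^ k) has_real_derivative - (real k * cutoff r ^ (k - 1))) (at r)"
proof -
  have "((\<lambda>r. if r \<in> {..1} then (1 - r) ^ k else 0) has_derivative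
      (if r \<in> {..1} then (\<lambda>h. - (real k * (1 - r) ^ (k - 1)) * h) else (\<lambda>h. 0)))
      (at r within {..1} \<union> {1..})"
    by (rule has_derivative_If_within_closures)
       (use k in \<open>auto intro!: derivative_eq_intros simp: fun_eq_iff\<close>)
  moreover have "(\<lambda>r. if r \<in> {..1} then (1 - r) ^ k else 0) = (\<lambda>r. cutoff r ^ k)"
    using k by (auto simp: cutoff_def fun_eq_iff)
  moreover have "(if r \<in> {..1} then (\<lambda>h. - (real k * (1 - r) ^ (k - 1)) * h) else (\<lambda>h. 0))
      = (*) (- (real k * cutoff r ^ (k - 1)))"
    using k by (auto simp: cutoff_def fun_eq_iff)
  moreover have "{..1::real} \<union> {1..} = UNIV" by auto
  ultimately show ?thesis by (simp add: has_field_derivative_def)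
qed

definition bump_profile :: "real \<Rightarrow> real" where
  "bump_profile r = cutoff r ^ 3"

definition bump_profile' :: "real \<Rightarrow> real" where
  "bump_profile' r = - 3 * cutoff r ^ 2"

definition bump_profile'' :: "real \<Rightarrow> real" where
  "bump_profile'' r = 6 * cutoff r"

lemma bump_profile_deriv: "(bump_profile has_real_derivative bump_profile' r) (at r)"
  using cutoff_power_deriv[of 3 r] unfolding bump_profile_def bump_profile'_def
  by (simp add: numeral_eq_Suc)

lemma bump_profile'_deriv: "(bump_profile' has_real_derivative bump_profile'' r) (at r)"
  using DERIV_cmult[OF cutoff_power_deriv[of 2 r], of "- 3"]
  unfolding bump_profile'_def bump_profile''_def by (simp add: fun_eq_iff)

definition bump :: "real^'n::finite \<Rightarrow> real" where
  "bump x = bump_profile (x \<bullet> x)"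

definition bump_grad :: "'n::finite \<Rightarrow> real^'n \<Rightarrow> real" where
  "bump_grad i x = bump_profile' (x \<bullet> x) * (2 * x$i)"

definition bump_hess :: "'n::finite \<Rightarrow> 'n \<Rightarrow> real^'n \<Rightarrow> real" where
  "bump_hess i j x = bump_profile'' (x \<bullet> x) * (2 * x$j) * (2 * x$i)
     + bump_profile' (x \<bullet> x) * (if i = j then 2 else 0)"

lemma has_line_deriv_bump: "has_line_deriv bump i (bump_grad i)"
  unfolding bump_def[abs_def] bump_grad_def[abs_def]
  by (rule has_line_deriv_radial[OF bump_profile_deriv])

lemma has_line_deriv_bump_grad: "has_line_deriv (bump_grad i) j (bump_hess i j)"
  unfolding bump_grad_def[abs_def] bump_hess_def[abs_def]
  by (rule has_line_deriv_mult[OF has_line_deriv_radial[OF bump_profile'_deriv]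
        has_line_deriv_component])

lemma continuous_bump:
  "continuous_on UNIV bump" "continuous_on UNIV (bump_grad i)" "continuous_on UNIV (bump_hess i j)"
  unfolding bump_def bump_grad_def bump_hess_def bump_profile_def bump_profile'_def
    bump_profile''_def cutoff_def
  by (auto intro!: continuous_intros)

lemma bump_vanish:
  assumes "x \<notin> cball 0 1"
  shows "bump x = 0" "bump_grad i x = 0" "bump_hess i j x = 0"
proof -
  have "1 < norm x" using assms by simp
  then have "1 < x \<bullet> x" by (simp add: norm_eq_sqrt_inner)
  then have "cutoff (x \<bullet> x) = 0" by (simp add: cutoff_def)
  then show "bump x = 0" "bump_grad i x = 0" "bump_hess i j x = 0"
    by (simp_all add: bump_def bump_grad_def bump_hess_def bump_profile_def bump_profile'_def
        bump_profile''_def)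
qed

lemma bump_range: "0 \<le> bump x" "bump x \<le> 1"
proof -
  have "0 \<le> cutoff (x \<bullet> x)" "cutoff (x \<bullet> x) \<le> 1" by (auto simp: cutoff_def)
  then show "0 \<le> bump x" "bump x \<le> 1"
    unfolding bump_def bump_profile_def by (auto intro: power_le_one)
qed

lemma bump_at_0: "bump 0 = 1"
  by (simp add: bump_def bump_profile_def cutoff_def)

subsection \<open>Dilations and membership in \<open>H\<^sup>2\<close>\<close>

definition dilate :: "real \<Rightarrow> real \<Rightarrow> (real^'n::finite \<Rightarrow> real) \<Rightarrow> real^'n \<Rightarrow> real" where
  "dilate lam a F x = a * F ((1 / lam) *\<^sub>R x)"

lemma continuous_dilate:
  assumes "continuous_on UNIV F"
  shows "continuous_on UNIV (dilate lam a F)"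
  unfolding dilate_def by (intro continuous_intros continuous_on_compose2[OF assms]) auto

lemma has_line_deriv_dilate:
  fixes F F' :: "real^'n::finite \<Rightarrow> real"
  assumes deriv: "has_line_deriv F i F'" and lam: "lam > 0"
  shows "has_line_deriv (dilate lam a F) i (dilate lam (a / lam) F')"
  unfolding has_line_deriv_def
proof
  fix x :: "real^'n"
  let ?y = "(1 / lam) *\<^sub>R x"
  have outer: "((\<lambda>t. F (?y + t *\<^sub>R axis i 1)) has_real_derivative F' ?y) (at ((\<lambda>s. s / lam) 0))"
    using deriv unfolding has_line_deriv_def by simp
  have inner: "((\<lambda>s. s / lam) has_real_derivative 1 / lam) (at 0)"
    using lam by (auto intro!: derivative_eq_intros)
  have "((\<lambda>s. a * F (?y + (s / lam) *\<^sub>R axis i 1)) has_real_derivative a * (F' ?y * (1 / lam))) (at 0)"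
    by (intro DERIV_cmult DERIV_chain2[OF outer inner])
  moreover have "?y + (s / lam) *\<^sub>R axis i 1 = (1 / lam) *\<^sub>R (x + s *\<^sub>R axis i 1)" for s
    by (simp add: scaleR_add_right)
  ultimately show "((\<lambda>s. dilate lam a F (x + s *\<^sub>R axis i 1)) has_real_derivative
      dilate lam (a / lam) F' x) (at 0)"
    unfolding dilate_def by simp
qed

lemma integral_dilate:
  fixes F :: "real^'n::finite \<Rightarrow> real"
  assumes cont: "continuous_on UNIV F" and lam: "lam > 0"
  shows "integral\<^sup>L lborel (dilate lam a F) = a * lam ^ CARD('n) * integral\<^sup>L lborel F"
proof -
  have "integral\<^sup>L lborel (dilate lam a F) =
      \<bar>lam\<bar> ^ DIM(real^'n) * (\<integral>x. dilate lam a F (0 + lam *\<^sub>R x) \<partial>lborel)"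
    using lam by (intro lborel_integral_affine continuous_lborel_measurable continuous_dilate cont) simp
  also have "(\<lambda>x. dilate lam a F (0 + lam *\<^sub>R x)) = (\<lambda>x. a * F x)"
    using lam by (simp add: dilate_def fun_eq_iff)
  finally show ?thesis using lam by simp
qed

lemma integrable_dilate:
  fixes F :: "real^'n::finite \<Rightarrow> real"
  assumes "integrable lborel F" "lam > 0"
  shows "integrable lborel (dilate lam a F)"
  using integrable_mult_right[OF lborel_integrable_affine[OF assms(1), of "1 / lam" 0], of a] assms(2)
  unfolding dilate_def by simp

lemma L2_dilate:
  fixes F :: "real^'n::finite \<Rightarrow> real"
  assumes cont: "continuous_on UNIV F" and square: "integrable lborel (\<lambda>x. (F x)^2)"
    and lam: "lam > 0"
  shows "L2 (dilate lam a F)"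
proof -
  have cont_dilate: "continuous_on UNIV (dilate lam a F)"
    by (rule continuous_dilate[OF cont])
  then have cont_square: "continuous_on UNIV (\<lambda>x. (dilate lam a F x)^2)"
    by (intro continuous_intros)
  have "integrable lborel (dilate lam (a^2) (\<lambda>x. (F x)^2))"
    by (rule integrable_dilate[OF square lam])
  moreover have "dilate lam (a^2) (\<lambda>x. (F x)^2) = (\<lambda>x. (dilate lam a F x)^2)"
    by (simp add: dilate_def fun_eq_iff power_mult_distrib)
  ultimately show ?thesis
    unfolding L2_def
    using continuous_lebesgue_integral(1)[OF cont_dilate] continuous_lebesgue_integral(2)[OF cont_square]
    by simp
qed

lemma H2_dilated_bump:
  assumes lam: "lam > 0"
  shows "H2_with (dilate lam t bump) (\<lambda>i. dilate lam (t / lam) (bump_grad i))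
           (\<lambda>i j. dilate lam (t / lam / lam) (bump_hess i j))"
proof -
  have cont: "continuous_on UNIV (dilate lam t bump)"
    "continuous_on UNIV (dilate lam (t / lam) (bump_grad i))"
    "continuous_on UNIV (dilate lam (t / lam / lam) (bump_hess i j))" for i j
    by (intro continuous_dilate continuous_bump)+
  have derivs: "has_line_deriv (dilate lam t bump) i (dilate lam (t / lam) (bump_grad i))"
    "has_line_deriv (dilate lam (t / lam) (bump_grad i)) j (dilate lam (t / lam / lam) (bump_hess i j))"
    for i j
    by (intro has_line_deriv_dilate has_line_deriv_bump has_line_deriv_bump_grad lam)+
  note weak = weak_derivatives_of_line_derivs[OF cont derivs]
  have L2: "L2 (dilate lam t bump)" "L2 (dilate lam (t / lam) (bump_grad i))"
    "L2 (dilate lam (t / lam / lam) (bump_hess i j))" for i j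
    by (intro L2_dilate continuous_bump integrable_square_compact_support[OF _ compact_cball] lam
        bump_vanish; assumption)+
  show ?thesis
    unfolding H2_with_def using L2 weak by blast
qed

subsection \<open>The nonlinear term\<close>

lemma nonlin_upper_pointwise:
  fixes f :: "real \<Rightarrow> real"
  assumes coercive: "\<And>s. s \<le> 0 \<Longrightarrow> - s - M \<le> f s" and t: "t \<le> 0" and w: "0 \<le> w"
  shows "t * w * f (t * w) \<le> - (t^2 * w^2) + M * \<bar>t\<bar> * w"
proof -
  have s: "t * w \<le> 0" using t w by (simp add: mult_nonpos_nonneg)
  have "t * w * f (t * w) \<le> t * w * (- (t * w) - M)"
    using coercive[OF s] s by (rule mult_left_mono_neg)
  also have "\<dots> = - (t^2 * w^2) + M * \<bar>t\<bar> * w"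
    using t by (simp add: algebra_simps power2_eq_square)
  finally show ?thesis .
qed

locale growth_nonlinearity =
  fixes f :: "real \<Rightarrow> real" and C1 p q :: real
  assumes C1_pos: "0 < C1" and p_ge_1: "1 \<le> p" and q_gt_1: "1 < q"
    and local_lipschitz: "\<And>u v. \<bar>f u - f v\<bar> \<le> C1 * (\<bar>u\<bar> + \<bar>v\<bar>) powr (p - 1) * \<bar>u - v\<bar>"
    and power_growth: "\<And>u. \<bar>f u\<bar> \<le> C1 * \<bar>u\<bar> powr q"
begin

lemma lipschitz_bounded:
  assumes "\<bar>u\<bar> \<le> B" "\<bar>v\<bar> \<le> B"
  shows "\<bar>f u - f v\<bar> \<le> C1 * (2 * B) powr (p - 1) * \<bar>u - v\<bar>"
proof -
  have "(\<bar>u\<bar> + \<bar>v\<bar>) powr (p - 1) \<le> (2 * B) powr (p - 1)"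
    by (rule powr_mono2) (use p_ge_1 assms in auto)
  then have "C1 * (\<bar>u\<bar> + \<bar>v\<bar>) powr (p - 1) * \<bar>u - v\<bar> \<le> C1 * (2 * B) powr (p - 1) * \<bar>u - v\<bar>"
    using C1_pos by (intro mult_right_mono mult_left_mono) auto
  then show ?thesis using local_lipschitz[of u v] by linarith
qed

lemma growth_bounded:
  assumes "\<bar>u\<bar> \<le> B"
  shows "\<bar>f u\<bar> \<le> C1 * B powr q"
proof -
  have "\<bar>u\<bar> powr q \<le> B powr q"
    by (rule powr_mono2) (use q_gt_1 assms in auto)
  then have "C1 * \<bar>u\<bar> powr q \<le> C1 * B powr q"
    using C1_pos by (intro mult_left_mono) auto
  then show ?thesis using power_growth[of u] by linarith
qed

lemma continuous_nonlinearity: "continuous_on UNIV f"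
proof (rule continuous_at_imp_continuous_on, intro ballI)
  fix v :: real
  let ?B = "\<bar>v\<bar> + 1"
  have "(C1 * (2 * ?B) powr (p - 1))-lipschitz_on (cball v 1) f"
  proof (rule lipschitz_onI)
    fix x y assume "x \<in> cball v 1" "y \<in> cball v 1"
    then have "\<bar>x\<bar> \<le> ?B" "\<bar>y\<bar> \<le> ?B" by (auto simp: dist_real_def)
    from lipschitz_bounded[OF this]
    show "dist (f x) (f y) \<le> C1 * (2 * ?B) powr (p - 1) * dist x y"
      by (simp add: dist_real_def)
  qed (use C1_pos in auto)
  then have "continuous_on (cball v 1) f" by (rule lipschitz_on_continuous_on)
  then show "isCont f v"
    using continuous_on_interior[of "cball v 1" f v] by simp
qed

text \<open>Hypothesis (A1) makes \<open>f(s) + s\<close> bounded below on \<open>s \<le> 0\<close>: near \<open>-\<infinity>\<close> by the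
  liminf, and on the remaining compact interval by the growth bound.\<close>

lemma coercive_bound:
  assumes "Liminf at_bot (\<lambda>u. ereal (f u + u)) > -\<infinity>"
  obtains M where "0 \<le> M" "\<And>s. s \<le> 0 \<Longrightarrow> - s - M \<le> f s"
proof -
  obtain r0 where r0: "ereal r0 < Liminf at_bot (\<lambda>u. ereal (f u + u))"
  proof (cases "Liminf at_bot (\<lambda>u. ereal (f u + u))")
    case (real L)
    then show thesis using that[of "L - 1"] by simp
  next
    case PInf
    then show thesis using that[of 0] by simp
  next
    case MInf
    then show thesis using assms by simp
  qed
  have "\<forall>\<^sub>F u in at_bot. ereal r0 < ereal (f u + u)"
    by (rule less_LiminfD[OF r0])
  then obtain N where N: "\<And>u. u \<le> N \<Longrightarrow> r0 < f u + u"
    by (auto simp: eventually_at_bot_linorder)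
  define M where "M = max 0 (max (- r0) (C1 * \<bar>N\<bar> powr q + \<bar>N\<bar>))"
  have "- s - M \<le> f s" if s: "s \<le> 0" for s
  proof (cases "s \<le> N")
    case True
    then show ?thesis using N[OF True] unfolding M_def by linarith
  next
    case False
    then have "\<bar>s\<bar> \<le> \<bar>N\<bar>" using s by auto
    with growth_bounded[OF this] show ?thesis unfolding M_def by linarith
  qed
  moreover have "0 \<le> M" unfolding M_def by simp
  ultimately show thesis using that by blast
qed

lemma nonlin_small_pointwise:
  assumes w: "0 \<le> w" "w \<le> 1"
  shows "\<bar>t * w * f (t * w)\<bar> \<le> C1 * \<bar>t\<bar> powr (q + 1) * w^2"
proof -
  let ?s = "t * w"
  have "\<bar>?s * f ?s\<bar> = \<bar>?s\<bar> * \<bar>f ?s\<bar>"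
    by (rule abs_mult)
  also have "\<dots> \<le> \<bar>?s\<bar> * (C1 * \<bar>?s\<bar> powr q)"
    by (rule mult_left_mono[OF power_growth abs_ge_zero])
  also have "\<dots> = C1 * \<bar>?s\<bar> powr (q + 1)"
    by (cases "?s = 0") (simp_all add: powr_add)
  also have "\<bar>?s\<bar> powr (q + 1) = \<bar>t\<bar> powr (q + 1) * w powr (q + 1)"
    using w by (simp add: abs_mult powr_mult)
  also have "w powr (q + 1) \<le> w^2"
    using powr_mono'[of 2 "q + 1" w] q_gt_1 w by simp
  finally show ?thesis using C1_pos by (simp add: mult_left_mono)
qed

lemma nonlin_lipschitz_pointwise:
  assumes w: "0 \<le> w" "w \<le> 1" and t: "\<bar>t\<bar> \<le> T" "\<bar>t'\<bar> \<le> T"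
  shows "\<bar>t * w * f (t * w) - t' * w * f (t' * w)\<bar>
    \<le> (T * (C1 * (2 * T) powr (p - 1)) + C1 * T powr q) * (\<bar>t - t'\<bar> * w)"
proof -
  let ?s = "t * w" and ?s' = "t' * w"
  have bounded: "\<bar>?s\<bar> \<le> T" "\<bar>?s'\<bar> \<le> T"
    using t w mult_mono[of "\<bar>t\<bar>" T w 1] mult_mono[of "\<bar>t'\<bar>" T w 1] by (auto simp: abs_mult)
  have diff: "\<bar>?s - ?s'\<bar> = \<bar>t - t'\<bar> * w"
    using w by (simp add: abs_mult left_diff_distrib[symmetric])
  have "\<bar>?s * f ?s - ?s' * f ?s'\<bar> = \<bar>?s * (f ?s - f ?s') + (?s - ?s') * f ?s'\<bar>"
    by (simp add: algebra_simps)
  also have "\<dots> \<le> \<bar>?s\<bar> * \<bar>f ?s - f ?s'\<bar> + \<bar>?s - ?s'\<bar> * \<bar>f ?s'\<bar>"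
    by (simp add: abs_mult[symmetric] abs_triangle_ineq)
  also have "\<bar>?s\<bar> * \<bar>f ?s - f ?s'\<bar> \<le> T * (C1 * (2 * T) powr (p - 1) * \<bar>?s - ?s'\<bar>)"
    using t by (intro mult_mono lipschitz_bounded bounded) auto
  also have "\<bar>?s - ?s'\<bar> * \<bar>f ?s'\<bar> \<le> \<bar>?s - ?s'\<bar> * (C1 * T powr q)"
    by (intro mult_left_mono growth_bounded bounded) auto
  finally show ?thesis unfolding diff by (simp add: algebra_simps)
qed

end

definition unit_profile :: "('a::euclidean_space \<Rightarrow> real) \<Rightarrow> bool" where
  "unit_profile \<phi> \<longleftrightarrow> continuous_on UNIV \<phi> \<and> (\<forall>x. 0 \<le> \<phi> x \<and> \<phi> x \<le> 1) \<and> integrable lborel \<phi>"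

definition nonlin_energy :: "(real \<Rightarrow> real) \<Rightarrow> ('a::euclidean_space \<Rightarrow> real) \<Rightarrow> real \<Rightarrow> real" where
  "nonlin_energy f \<phi> t = (\<integral>x. t * \<phi> x * f (t * \<phi> x) \<partial>lborel)"

lemma unit_profile_square_integrable:
  assumes "unit_profile \<phi>"
  shows "integrable lborel (\<lambda>x. (\<phi> x)^2)"
proof (rule Bochner_Integration.integrable_bound)
  show "integrable lborel \<phi>" using assms unfolding unit_profile_def by blast
  show "(\<lambda>x. (\<phi> x)^2) \<in> borel_measurable lborel"
    using assms unfolding unit_profile_def by (intro continuous_lborel_measurable continuous_intros) blast
  show "AE x in lborel. norm ((\<phi> x)^2) \<le> norm (\<phi> x)"
    using assms unfolding unit_profile_def by (auto simp: power2_eq_square intro: mult_left_le)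
qed

lemma unit_profile_integral_nonneg:
  assumes "unit_profile \<phi>"
  shows "0 \<le> integral\<^sup>L lborel \<phi>"
  using assms unfolding unit_profile_def by (intro integral_nonneg_AE) auto

context growth_nonlinearity
begin

lemma nonlin_integrable:
  assumes "unit_profile \<phi>"
  shows "integrable lborel (\<lambda>x. t * \<phi> x * f (t * \<phi> x))"
proof (rule Bochner_Integration.integrable_bound)
  show "integrable lborel (\<lambda>x. C1 * \<bar>t\<bar> powr (q + 1) * (\<phi> x)^2)"
    using unit_profile_square_integrable[OF assms] by simp
  show "(\<lambda>x. t * \<phi> x * f (t * \<phi> x)) \<in> borel_measurable lborel"
    using assms unfolding unit_profile_def
    by (intro continuous_lborel_measurable continuous_intros continuous_on_compose2[OF continuous_nonlinearity]) auto
  show "AE x in lborel. norm (t * \<phi> x * f (t * \<phi> x)) \<le> norm (C1 * \<bar>t\<bar> powr (q + 1) * (\<phi> x)^2)"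
  proof (rule AE_I2)
    fix x
    have "0 \<le> \<phi> x" "\<phi> x \<le> 1" using assms unfolding unit_profile_def by auto
    from nonlin_small_pointwise[OF this, of t]
    show "norm (t * \<phi> x * f (t * \<phi> x)) \<le> norm (C1 * \<bar>t\<bar> powr (q + 1) * (\<phi> x)^2)"
      unfolding real_norm_def by (rule order_trans[OF _ abs_ge_self])
  qed
qed

lemma nonlin_energy_lower:
  assumes "unit_profile \<phi>"
  shows "- (C1 * \<bar>t\<bar> powr (q + 1) * (\<integral>x. (\<phi> x)^2 \<partial>lborel)) \<le> nonlin_energy f \<phi> t"
proof -
  have "(\<integral>x. - (C1 * \<bar>t\<bar> powr (q + 1)) * (\<phi> x)^2 \<partial>lborel) \<le> nonlin_energy f \<phi> t"
    unfolding nonlin_energy_def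
  proof (rule integral_mono[OF _ nonlin_integrable[OF assms]])
    show "integrable lborel (\<lambda>x. - (C1 * \<bar>t\<bar> powr (q + 1)) * (\<phi> x)^2)"
      using unit_profile_square_integrable[OF assms] by simp
    show "- (C1 * \<bar>t\<bar> powr (q + 1)) * (\<phi> x)^2 \<le> t * \<phi> x * f (t * \<phi> x)" for x
      using nonlin_small_pointwise[of "\<phi> x" t] assms unfolding unit_profile_def by (simp add: abs_le_iff)
  qed
  then show ?thesis by simp
qed

lemma nonlin_energy_upper:
  assumes "unit_profile \<phi>" and coercive: "\<And>s. s \<le> 0 \<Longrightarrow> - s - M \<le> f s" and t: "t \<le> 0"
  shows "nonlin_energy f \<phi> t \<le> - (t^2 * (\<integral>x. (\<phi> x)^2 \<partial>lborel)) + M * \<bar>t\<bar> * integral\<^sup>L lborel \<phi>"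
proof -
  have int: "integrable lborel \<phi>" "integrable lborel (\<lambda>x. (\<phi> x)^2)"
    using assms(1) unit_profile_square_integrable unfolding unit_profile_def by auto
  have "nonlin_energy f \<phi> t \<le> (\<integral>x. - (t^2 * (\<phi> x)^2) + (M * \<bar>t\<bar>) * \<phi> x \<partial>lborel)"
    unfolding nonlin_energy_def
  proof (rule integral_mono[OF nonlin_integrable[OF assms(1)]])
    show "integrable lborel (\<lambda>x. - (t^2 * (\<phi> x)^2) + (M * \<bar>t\<bar>) * \<phi> x)"
      using int by simp
    show "t * \<phi> x * f (t * \<phi> x) \<le> - (t^2 * (\<phi> x)^2) + (M * \<bar>t\<bar>) * \<phi> x" for x
      using nonlin_upper_pointwise[OF coercive t] assms(1) unfolding unit_profile_def by simp
  qed
  also have "\<dots> = - (t^2 * (\<integral>x. (\<phi> x)^2 \<partial>lborel)) + M * \<bar>t\<bar> * integral\<^sup>L lborel \<phi>"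
    using int by simp
  finally show ?thesis .
qed

lemma nonlin_energy_lipschitz:
  assumes "unit_profile \<phi>" and t: "\<bar>t\<bar> \<le> T" "\<bar>t'\<bar> \<le> T"
  shows "\<bar>nonlin_energy f \<phi> t - nonlin_energy f \<phi> t'\<bar>
    \<le> (T * (C1 * (2 * T) powr (p - 1)) + C1 * T powr q) * integral\<^sup>L lborel \<phi> * \<bar>t - t'\<bar>"
proof -
  let ?L = "T * (C1 * (2 * T) powr (p - 1)) + C1 * T powr q"
  let ?D = "\<lambda>x. t * \<phi> x * f (t * \<phi> x) - t' * \<phi> x * f (t' * \<phi> x)"
  have int_D: "integrable lborel ?D"
    using nonlin_integrable[OF assms(1)] by simp
  have int_\<phi>: "integrable lborel \<phi>" using assms(1) unfolding unit_profile_def by blast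
  have "\<bar>nonlin_energy f \<phi> t - nonlin_energy f \<phi> t'\<bar> = \<bar>integral\<^sup>L lborel ?D\<bar>"
    unfolding nonlin_energy_def using nonlin_integrable[OF assms(1)] by simp
  also have "\<dots> \<le> (\<integral>x. \<bar>?D x\<bar> \<partial>lborel)"
    by (rule integral_abs_bound)
  also have "\<dots> \<le> (\<integral>x. (?L * \<bar>t - t'\<bar>) * \<phi> x \<partial>lborel)"
  proof (rule integral_mono)
    show "integrable lborel (\<lambda>x. \<bar>?D x\<bar>)" using int_D by (rule integrable_abs)
    show "integrable lborel (\<lambda>x. (?L * \<bar>t - t'\<bar>) * \<phi> x)" using int_\<phi> by simp
    show "\<bar>?D x\<bar> \<le> (?L * \<bar>t - t'\<bar>) * \<phi> x" for x
      using nonlin_lipschitz_pointwise[of "\<phi> x", OF _ _ t] assms(1)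
      unfolding unit_profile_def by (simp add: mult_ac)
  qed
  also have "\<dots> = ?L * integral\<^sup>L lborel \<phi> * \<bar>t - t'\<bar>"
    by (simp add: mult_ac)
  finally show ?thesis .
qed

lemma nonlin_energy_continuous:
  assumes "unit_profile \<phi>"
  shows "continuous_on UNIV (nonlin_energy f \<phi>)"
proof (rule continuous_at_imp_continuous_on, intro ballI)
  fix t0 :: real
  let ?T = "\<bar>t0\<bar> + 1"
  let ?K = "(?T * (C1 * (2 * ?T) powr (p - 1)) + C1 * ?T powr q) * integral\<^sup>L lborel \<phi>"
  from unit_profile_integral_nonneg[OF assms] have "?K-lipschitz_on (cball t0 1) (nonlin_energy f \<phi>)"
  proof (intro lipschitz_onI)
    fix x y assume "x \<in> cball t0 1" "y \<in> cball t0 1"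
    then have "\<bar>x\<bar> \<le> ?T" "\<bar>y\<bar> \<le> ?T" by (auto simp: dist_real_def)
    from nonlin_energy_lipschitz[OF assms this]
    show "dist (nonlin_energy f \<phi> x) (nonlin_energy f \<phi> y) \<le> ?K * dist x y"
      by (simp add: dist_real_def)
  qed (use C1_pos in simp)
  then have "continuous_on (cball t0 1) (nonlin_energy f \<phi>)"
    by (rule lipschitz_on_continuous_on)
  then show "isCont (nonlin_energy f \<phi>) t0"
    using continuous_on_interior[of "cball t0 1" _ t0] by simp
qed

end

subsection \<open>The energy of dilated bumps\<close>

lemma unit_profile_dilated_bump:
  assumes lam: "0 < lam"
  shows "unit_profile (dilate lam 1 bump)"
proof -
  have "integrable lborel (bump :: real^'n \<Rightarrow> real)"
    by (rule integrable_compact_support[OF continuous_bump(1) compact_cball bump_vanish(1)])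
  then have "integrable lborel (dilate lam 1 (bump :: real^'n \<Rightarrow> real))"
    by (rule integrable_dilate[OF _ lam])
  moreover have "continuous_on UNIV (dilate lam 1 (bump :: real^'n \<Rightarrow> real))"
    by (intro continuous_dilate continuous_bump)
  moreover have "0 \<le> dilate lam 1 bump x \<and> dilate lam 1 bump x \<le> 1" for x :: "real^'n"
    by (simp add: dilate_def bump_range)
  ultimately show ?thesis unfolding unit_profile_def by blast
qed

text \<open>The energy of \<open>c \<cdot> \<nabla>b\<close> is positive: at \<open>x = c/2\<close>, which lies inside the unit ball
  because \<open>|c| < 2\<close>, the directional derivative of the bump is nonzero.\<close>

lemma bump_energies_pos:
  fixes c :: "real^'n::finite"
  assumes c: "0 < norm c" "norm c < 2"
  shows "0 < (\<integral>x. (\<Sum>i\<in>UNIV. c$i * bump_grad i x)^2 \<partial>lborel)"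
    and "0 < (\<integral>(x::real^'n). (bump x)^2 \<partial>lborel)"
proof -
  have directional: "(\<Sum>i\<in>UNIV. c$i * bump_grad i x) = 2 * bump_profile' (x \<bullet> x) * (c \<bullet> x)" for x
  proof -
    have "(\<Sum>i\<in>UNIV. c$i * bump_grad i x) = (\<Sum>i\<in>UNIV. 2 * bump_profile' (x \<bullet> x) * (c$i * x$i))"
      unfolding bump_grad_def by (rule sum.cong) (simp_all add: algebra_simps)
    then show ?thesis unfolding inner_vec_def by (simp add: sum_distrib_left)
  qed
  let ?x = "(1/2) *\<^sub>R c"
  have "norm c ^ 2 < 2 ^ 2" using c by (intro power_strict_mono) auto
  then have "?x \<bullet> ?x < 1" by (simp add: power2_norm_eq_inner[symmetric] power_divide)
  then have "bump_profile' (?x \<bullet> ?x) \<noteq> 0" by (simp add: bump_profile'_def cutoff_def)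
  moreover have "0 < c \<bullet> ?x" using c by simp
  ultimately have "0 < (\<Sum>i\<in>UNIV. c$i * bump_grad i ?x)^2"
    unfolding directional by simp
  moreover have "integrable lborel (\<lambda>x. (\<Sum>i\<in>UNIV. c$i * bump_grad i x)^2)"
    by (rule integrable_square_compact_support[OF _ compact_cball[of 0 1]])
       (auto intro!: continuous_intros continuous_bump simp: bump_vanish)
  ultimately show "0 < (\<integral>x. (\<Sum>i\<in>UNIV. c$i * bump_grad i x)^2 \<partial>lborel)"
    by (intro integral_pos_continuous[of _ ?x]) (auto intro!: continuous_intros continuous_bump)
  have "integrable lborel (\<lambda>x::real^'n. (bump x)^2)"
    by (rule integrable_square_compact_support[OF continuous_bump(1) compact_cball bump_vanish(1)])
  then show "0 < (\<integral>(x::real^'n). (bump x)^2 \<partial>lborel)"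
    by (intro integral_pos_continuous[of _ 0]) (auto intro!: continuous_intros continuous_bump simp: bump_at_0)
qed

lemma quadratic_energy_dilated_bump:
  fixes c :: "real^'n::finite"
  assumes lam: "0 < lam"
  shows "(\<integral>x. (\<Sum>i\<in>UNIV. dilate lam (t / lam / lam) (bump_hess i i) x)^2
        - (\<Sum>i\<in>UNIV. c$i * dilate lam (t / lam) (bump_grad i) x)^2
        + (dilate lam t bump x)^2 \<partial>lebesgue)
    = t^2 * (lam ^ CARD('n) * ((\<integral>(x::real^'n). (\<Sum>i\<in>UNIV. bump_hess i i x)^2 \<partial>lborel) / lam^4
        - (\<integral>x. (\<Sum>i\<in>UNIV. c$i * bump_grad i x)^2 \<partial>lborel) / lam^2 + (\<integral>(x::real^'n). (bump x)^2 \<partial>lborel)))"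
proof -
  define Fq where "Fq y = (\<Sum>i\<in>UNIV. bump_hess i i y)^2 / lam^4
    - (\<Sum>i\<in>UNIV. c$i * bump_grad i y)^2 / lam^2 + (bump y)^2" for y :: "real^'n"
  have cont: "continuous_on UNIV Fq"
    unfolding Fq_def by (intro continuous_intros continuous_bump) (use lam in auto)
  have int: "integrable lborel (\<lambda>x::real^'n. (\<Sum>i\<in>UNIV. bump_hess i i x)^2)"
      "integrable lborel (\<lambda>x. (\<Sum>i\<in>UNIV. c$i * bump_grad i x)^2)"
      "integrable lborel (\<lambda>x::real^'n. (bump x)^2)"
    by (rule integrable_square_compact_support[OF _ compact_cball[of 0 1]];
        auto intro!: continuous_intros continuous_bump simp: bump_vanish)+
  have "(\<lambda>x. (\<Sum>i\<in>UNIV. dilate lam (t / lam / lam) (bump_hess i i) x)^2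
        - (\<Sum>i\<in>UNIV. c$i * dilate lam (t / lam) (bump_grad i) x)^2 + (dilate lam t bump x)^2)
      = dilate lam (t^2) Fq"
  proof
    fix x :: "real^'n"
    let ?y = "(1 / lam) *\<^sub>R x"
    have hess: "(\<Sum>i\<in>UNIV. dilate lam (t / lam / lam) (bump_hess i i) x)
        = t / lam^2 * (\<Sum>i\<in>UNIV. bump_hess i i ?y)"
      by (simp add: dilate_def sum_distrib_left power2_eq_square)
    have grad: "(\<Sum>i\<in>UNIV. c$i * dilate lam (t / lam) (bump_grad i) x)
        = t / lam * (\<Sum>i\<in>UNIV. c$i * bump_grad i ?y)"
      by (simp add: dilate_def sum_distrib_left algebra_simps)
    show "(\<Sum>i\<in>UNIV. dilate lam (t / lam / lam) (bump_hess i i) x)^2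
        - (\<Sum>i\<in>UNIV. c$i * dilate lam (t / lam) (bump_grad i) x)^2 + (dilate lam t bump x)^2
      = dilate lam (t^2) Fq x"
      unfolding hess grad using lam
      by (simp add: dilate_def Fq_def power_mult_distrib power_divide field_simps)
  qed
  moreover have "integral\<^sup>L lborel Fq = (\<integral>(x::real^'n). (\<Sum>i\<in>UNIV. bump_hess i i x)^2 \<partial>lborel) / lam^4
      - (\<integral>x. (\<Sum>i\<in>UNIV. c$i * bump_grad i x)^2 \<partial>lborel) / lam^2 + (\<integral>(x::real^'n). (bump x)^2 \<partial>lborel)"
    unfolding Fq_def using int by simp
  ultimately show ?thesis
    using continuous_lebesgue_integral(3)[OF continuous_dilate[OF cont]] integral_dilate[OF cont lam]
    by simp
qed

lemma exists_good_scale: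
  fixes D E W :: real
  assumes D: "0 \<le> D" and E: "0 < E" and W: "0 < W"
  obtains lam where "0 < lam" "0 < D / lam^4 - E / lam^2 + W" "D / lam^4 - E / lam^2 < 0"
proof -
  define \<Lambda> where "\<Lambda> = D / E + E / W + 1"
  have \<Lambda>: "0 < \<Lambda>" unfolding \<Lambda>_def using D E W by (simp add: add_nonneg_pos)
  define lam where "lam = sqrt \<Lambda>"
  have lam: "0 < lam" "lam^2 = \<Lambda>"
    unfolding lam_def using \<Lambda> by simp_all
  have "lam^4 = (lam^2)^2" by simp
  then have lam4: "lam^4 = \<Lambda>^2" unfolding lam(2) .
  have "E < \<Lambda> * W"
    unfolding \<Lambda>_def using D E W by (simp add: field_simps add_nonneg_pos)
  then have EW: "E / \<Lambda> < W" using \<Lambda> by (simp add: divide_less_eq mult.commute)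
  have "D < \<Lambda> * E"
    unfolding \<Lambda>_def using D E W by (simp add: field_simps add_pos_pos)
  then have "D / \<Lambda> / \<Lambda> < E / \<Lambda>" using \<Lambda> by (intro divide_strict_right_mono) (simp_all add: divide_less_eq mult.commute)
  then have DE: "D / \<Lambda>^2 < E / \<Lambda>" by (simp add: power2_eq_square)
  have "0 \<le> D / \<Lambda>^2" using D by simp
  then show thesis using that[OF lam(1)] EW DE unfolding lam(2) lam4 by linarith
qed

lemma nonlin_integral_dilated_bump:
  fixes f :: "real \<Rightarrow> real"
  assumes f: "continuous_on UNIV f" and lam: "0 < lam"
  shows "(\<integral>(x::real^'n::finite). dilate lam t bump x * f (dilate lam t bump x) \<partial>lebesgue)
    = nonlin_energy f (dilate lam 1 (bump :: real^'n \<Rightarrow> real)) t"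
proof -
  have "continuous_on UNIV (\<lambda>x. dilate lam t (bump :: real^'n \<Rightarrow> real) x * f (dilate lam t bump x))"
    by (intro continuous_intros continuous_on_compose2[OF f] continuous_dilate continuous_bump) auto
  from continuous_lebesgue_integral(3)[OF this] show ?thesis
    unfolding nonlin_energy_def by (simp add: dilate_def)
qed

lemma good_dilation:
  fixes c :: "real^'n::finite" and f :: "real \<Rightarrow> real"
  assumes c: "0 < norm c" "norm c < 2" and f: "continuous_on UNIV f"
  obtains lam A where "0 < lam" "0 < A" "A < (\<integral>(x::real^'n). (dilate lam 1 bump x)^2 \<partial>lborel)"
    and "\<And>t. Pc c f (dilate lam t bump) (\<lambda>i. dilate lam (t / lam) (bump_grad i))
          (\<lambda>i j. dilate lam (t / lam / lam) (bump_hess i j))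
        = t^2 * A + nonlin_energy f (dilate lam 1 (bump :: real^'n \<Rightarrow> real)) t"
proof -
  define D where "D = (\<integral>(x::real^'n). (\<Sum>i\<in>UNIV. bump_hess i i x)^2 \<partial>lborel)"
  define E where "E = (\<integral>x. (\<Sum>i\<in>UNIV. c$i * bump_grad i x)^2 \<partial>lborel)"
  define W where "W = (\<integral>(x::real^'n). (bump x)^2 \<partial>lborel)"
  have "0 \<le> D" unfolding D_def by (intro integral_nonneg_AE) simp
  moreover have "0 < E" "0 < W" unfolding E_def W_def by (rule bump_energies_pos[OF c])+
  ultimately obtain lam where lam: "0 < lam"
    and Q: "0 < D / lam^4 - E / lam^2 + W" "D / lam^4 - E / lam^2 < 0"
    using exists_good_scale by blast
  have "(\<integral>(x::real^'n). (dilate lam 1 bump x)^2 \<partial>lborel)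
      = (\<integral>(x::real^'n). dilate lam 1 (\<lambda>y. (bump y)^2) x \<partial>lborel)"
    by (simp add: dilate_def)
  also have "\<dots> = lam ^ CARD('n) * W"
    unfolding W_def by (simp add: integral_dilate[OF _ lam] continuous_bump continuous_intros)
  finally have less: "lam ^ CARD('n) * (D / lam^4 - E / lam^2 + W)
      < (\<integral>(x::real^'n). (dilate lam 1 bump x)^2 \<partial>lborel)"
    using Q lam by simp
  have pos: "0 < lam ^ CARD('n) * (D / lam^4 - E / lam^2 + W)"
    using Q lam by simp
  have "Pc c f (dilate lam t bump) (\<lambda>i. dilate lam (t / lam) (bump_grad i))
      (\<lambda>i j. dilate lam (t / lam / lam) (bump_hess i j))
    = t^2 * (lam ^ CARD('n) * (D / lam^4 - E / lam^2 + W))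
      + nonlin_energy f (dilate lam 1 (bump :: real^'n \<Rightarrow> real)) t" for t
    unfolding Pc_def D_def E_def W_def
    using quadratic_energy_dilated_bump[OF lam, of t c] nonlin_integral_dilated_bump[OF f lam, of t]
    by simp
  then show thesis by (rule that[OF lam pos less])
qed

lemma dilated_bump_nontrivial:
  assumes lam: "0 < lam" and t: "t \<noteq> 0"
  shows "\<not> (AE x in lebesgue. dilate lam t (bump :: real^'n::finite \<Rightarrow> real) x = 0)"
proof
  let ?u = "dilate lam t (bump :: real^'n \<Rightarrow> real)"
  assume "AE x in lebesgue. ?u x = 0"
  then have "(\<integral>x. (?u x)^2 \<partial>lebesgue) = 0"
    by (intro integral_eq_zero_AE) (auto elim: eventually_mono)
  moreover have cont: "continuous_on UNIV (\<lambda>x. (?u x)^2)"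
    by (intro continuous_intros continuous_dilate continuous_bump)
  moreover have "0 < (\<integral>x. (?u x)^2 \<partial>lborel)"
  proof (rule integral_pos_continuous[OF cont, of 0])
    have "integrable lborel (dilate lam (t^2) (\<lambda>x::real^'n. (bump x)^2))"
      by (intro integrable_dilate lam integrable_square_compact_support[OF _ compact_cball bump_vanish(1)]
          continuous_bump)
    moreover have "dilate lam (t^2) (\<lambda>x. (bump x)^2) = (\<lambda>x. (?u x)^2)"
      by (simp add: dilate_def fun_eq_iff power_mult_distrib)
    ultimately show "integrable lborel (\<lambda>x. (?u x)^2)"
      by simp
  qed (use t in \<open>simp_all add: dilate_def bump_at_0\<close>)
  ultimately show False
    using continuous_lebesgue_integral(3)[OF cont] by simp
qed

subsection \<open>The sign change\<close>

text \<open>If \<open>0 < A < W\<close>, then \<open>t \<mapsto> t\<^sup>2 A + N(t)\<close> is positive for small \<open>t < 0\<close> (where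
  \<open>N = O(|t|\<^sup>q\<^sup>+\<^sup>1)\<close>) and negative for large \<open>t < 0\<close> (where \<open>N \<le> -t\<^sup>2 W + O(|t|)\<close>), so it
  vanishes at some \<open>t < 0\<close>.\<close>

lemma negative_zero_of_energy:
  fixes N :: "real \<Rightarrow> real"
  assumes cont: "continuous_on UNIV N" and A: "0 < A" "A < W" and C: "0 < C" and q: "1 < q"
    and MI: "0 \<le> M" "0 \<le> I"
    and lower: "\<And>t. - (C * \<bar>t\<bar> powr (q + 1) * W) \<le> N t"
    and upper: "\<And>t. t \<le> 0 \<Longrightarrow> N t \<le> - (t^2 * W) + M * \<bar>t\<bar> * I"
  shows "\<exists>t<0. t^2 * A + N t = 0"
proof -
  have W: "0 < W" using A by linarith
  define a where "a = (A / (2 * C * W)) powr (1 / (q - 1))"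
  have a: "0 < a" unfolding a_def using A C W by simp
  have positive: "0 < (- a)^2 * A + N (- a)"
  proof -
    have "a powr (q - 1) = A / (2 * C * W)"
      unfolding a_def powr_powr using q A C W by simp
    moreover have "\<bar>- a\<bar> powr (q + 1) = a powr (q - 1) * a^2"
      using a powr_add[of a "q - 1" 2] by (simp add: add.commute)
    ultimately have "C * \<bar>- a\<bar> powr (q + 1) * W = a^2 * A / 2"
      using C W by (simp add: field_simps)
    then have "- (a^2 * A / 2) \<le> N (- a)" using lower[of "- a"] by simp
    moreover have "0 < a^2 * A" using a A by simp
    moreover have "(- a)^2 * A = a^2 * A" by simp
    ultimately show ?thesis by linarith
  qed
  define T where "T = M * I / (W - A) + a + 1"
  have "0 \<le> M * I / (W - A)" using MI A by simp
  then have T: "a < T" unfolding T_def by linarith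
  have negative: "(- T)^2 * A + N (- T) < 0"
  proof -
    have "(- T)^2 * A + N (- T) \<le> T^2 * A - T^2 * W + M * T * I"
      using upper[of "- T"] T a by simp
    also have "\<dots> = T * (M * I - T * (W - A))" by (simp add: algebra_simps power2_eq_square)
    also have "T * (W - A) = M * I + (a + 1) * (W - A)" unfolding T_def using A by (simp add: field_simps)
    also have "T * (M * I - (M * I + (a + 1) * (W - A))) < 0" using T a A by (simp add: mult_pos_neg)
    finally show ?thesis .
  qed
  have "continuous_on {- T..- a} (\<lambda>t. t^2 * A + N t)"
    by (intro continuous_intros continuous_on_subset[OF cont]) simp
  then obtain t where "- T \<le> t" "t \<le> - a" "t^2 * A + N t = 0"
    using IVT'[of "\<lambda>t. t^2 * A + N t" "- T" 0 "- a"] negative positive T by auto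
  then show ?thesis using a by (intro exI[of _ t]) auto
qed

theorem lemma2p2:
  fixes f :: "real \<Rightarrow> real" and c :: "real^'n"
  assumes A1_diff: "AE x in lborel. f differentiable (at x)"
    and A1_liminf: "Liminf at_bot (\<lambda>u. ereal (f u + u)) > -\<infinity>"
    and A2: "\<exists>C1 p q. C1 > 0 \<and> p \<ge> 1 \<and> q > 1
        \<and> (\<forall>u v. \<bar>f u - f v\<bar> \<le> C1 * (\<bar>u\<bar> + \<bar>v\<bar>) powr (p - 1) * \<bar>u - v\<bar>)
        \<and> (\<forall>u. \<bar>f u\<bar> \<le> C1 * \<bar>u\<bar> powr q)
        \<and> (CARD('n) > 4 \<longrightarrow> p < (real CARD('n) + 4) / (real CARD('n) - 4)
                          \<and> q < (real CARD('n) + 4) / (real CARD('n) - 4))"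
    and c_pos: "0 < norm c" and c_small: "norm c < sqrt 2"
  shows "\<exists>u G H. H2_with u G H \<and> \<not> (AE x in lebesgue. u x = 0) \<and> Pc c f u G H = 0"
proof -
  obtain C1 p q where "growth_nonlinearity f C1 p q"
    using A2 unfolding growth_nonlinearity_def by blast
  then interpret growth_nonlinearity f C1 p q .
  obtain M where M: "0 \<le> M" "\<And>s. s \<le> 0 \<Longrightarrow> - s - M \<le> f s"
    using coercive_bound[OF A1_liminf] by blast
  have "norm c < 2" using c_small sqrt2_less_2 by linarith
  then obtain lam A where lam: "0 < lam"
    and A: "0 < A" "A < (\<integral>(x::real^'n). (dilate lam 1 bump x)^2 \<partial>lborel)"
    and P: "\<And>t. Pc c f (dilate lam t bump) (\<lambda>i. dilate lam (t / lam) (bump_grad i))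
          (\<lambda>i j. dilate lam (t / lam / lam) (bump_hess i j))
        = t^2 * A + nonlin_energy f (dilate lam 1 (bump :: real^'n \<Rightarrow> real)) t"
    using good_dilation[OF c_pos _ continuous_nonlinearity] by blast
  have profile: "unit_profile (dilate lam 1 (bump :: real^'n \<Rightarrow> real))"
    by (rule unit_profile_dilated_bump[OF lam])
  obtain t where t: "t < 0" "t^2 * A + nonlin_energy f (dilate lam 1 (bump :: real^'n \<Rightarrow> real)) t = 0"
    using negative_zero_of_energy[OF nonlin_energy_continuous[OF profile] A C1_pos q_gt_1 M(1)
        unit_profile_integral_nonneg[OF profile] nonlin_energy_lower[OF profile]
        nonlin_energy_upper[OF profile M(2)]] by blast
  let ?u = "dilate lam t (bump :: real^'n \<Rightarrow> real)"
  let ?G = "\<lambda>i. dilate lam (t / lam) (bump_grad i)"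
  let ?H = "\<lambda>i j. dilate lam (t / lam / lam) (bump_hess i j)"
  have "H2_with ?u ?G ?H" by (rule H2_dilated_bump[OF lam])
  moreover have "\<not> (AE x in lebesgue. ?u x = 0)"
    by (rule dilated_bump_nontrivial[OF lam]) (use t(1) in simp)
  moreover have "Pc c f ?u ?G ?H = 0"
    using P[of t] t(2) by simp
  ultimately show ?thesis by blast
qed

end
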